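(* Let $\mathcal G$ be an undirected graph on nodes $\{1,\dots,n\}$ with adjacency matrix $A=(a_{ij})\in\{0,1\}^{n\times n}$, and consider the networked SIR process on $\mathcal G$ with infection rates $\beta_i>0$ and recovery rates $\delta_i>0$, $i=1,\dots,n$. Define the $n\times n$ diagonal matrices $J$, $B$, $D$ by $J_{ii}=S_i(0)$, $B_{ii}=\beta_i$, $D_{ii}=\delta_i$. Let $\bar\lambda>0$ be given. If there exists an entrywise positive vector $v\in\mathbb R^n$ such that $$v^\top JBA+\mathbf 1_n^\top D< v^\top D \quad\text{(entrywise)}\qquad\text{and}\qquad v^\top I(0)<\bar\lambda+\sigma_I(0),$$ then $\lambda<\bar\lambda$.
   Context: Networked SIR process: each node $i$ is at each time $t\ge0$ in exactly one of the states susceptible, infected, removed, encoded by $\{0,1\}$-valued variables $S_i(t),I_i(t),R_i(t)$ (exactly one equals $1$). It is a continuous-time Markov process with transition probabilities, for all $t\ge 0$, $h>0$: $\Pr(I_i(t+h)=1\mid S_i(t)=1)=\beta_i\sum_{j=1}^n a_{ij}I_j(t)\,h+o(h)$ and $\Pr(R_i(t+h)=1\mid I_i(t)=1)=\delta_i h+o(h)$; no other transitions occur (removed nodes stay removed). At time $0$ each node is (deterministically, known) either susceptible or infected. $I(t)=[I_1(t),\dots,I_n(t)]^\top$. $\sigma_I(t)$ and $\sigma_R(t)$ denote the numbers of infected and removed nodes at time $t$, and $\lambda=\lim_{t\to\infty}E[\sigma_R(t)]-\sigma_I(0)$ (the expected number of infections after time $0$). $\mathbf 1_n$ is the all-ones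 vector in $\mathbb R^n$; inequalities between vectors are entrywise. *)

theory Defs
  imports Complex_Main
begin

datatype comp = Sus | Inf | Rem

lemma UNIV_comp: "UNIV = {Sus, Inf, Rem}"
  using comp.exhaust by auto

instance comp :: finite
  by standard (simp add: UNIV_comp)

definition sir_rate ::
  "('n::finite \<Rightarrow> 'n \<Rightarrow> real) \<Rightarrow> ('n \<Rightarrow> real) \<Rightarrow> ('n \<Rightarrow> real)
   \<Rightarrow> ('n \<Rightarrow> comp) \<Rightarrow> ('n \<Rightarrow> comp) \<Rightarrow> real" where
  "sir_rate a \<beta> \<delta> x y =
     (\<Sum>i\<in>UNIV.
        (if x i = Sus \<and> y = x(i := Inf)
         then \<beta> i * (\<Sum>j\<in>UNIV. a i j * (if x j = Inf then 1 else 0)) else 0)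
      + (if x i = Inf \<and> y = x(i := Rem) then \<delta> i else 0))"

definition sir_gen ::
  "('n::finite \<Rightarrow> 'n \<Rightarrow> real) \<Rightarrow> ('n \<Rightarrow> real) \<Rightarrow> ('n \<Rightarrow> real)
   \<Rightarrow> ('n \<Rightarrow> comp) \<Rightarrow> ('n \<Rightarrow> comp) \<Rightarrow> real" where
  "sir_gen a \<beta> \<delta> x y =
     (if x = y then - (\<Sum>z\<in>UNIV - {x}. sir_rate a \<beta> \<delta> x z)
      else sir_rate a \<beta> \<delta> x y)"

fun mat_pow :: "('s::finite \<Rightarrow> 's \<Rightarrow> real) \<Rightarrow> nat \<Rightarrow> 's \<Rightarrow> 's \<Rightarrow> real" where
  "mat_pow Q 0 x y = (if x = y then 1 else 0)"
| "mat_pow Q (Suc k) x y = (\<Sum>z\<in>UNIV. mat_pow Q k x z * Q z y)"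

definition sir_trans ::
  "('n::finite \<Rightarrow> 'n \<Rightarrow> real) \<Rightarrow> ('n \<Rightarrow> real) \<Rightarrow> ('n \<Rightarrow> real)
   \<Rightarrow> real \<Rightarrow> ('n \<Rightarrow> comp) \<Rightarrow> ('n \<Rightarrow> comp) \<Rightarrow> real" where
  "sir_trans a \<beta> \<delta> t x y =
     (\<Sum>k. t ^ k / fact k * mat_pow (sir_gen a \<beta> \<delta>) k x y)"

definition count_comp :: "comp \<Rightarrow> ('n::finite \<Rightarrow> comp) \<Rightarrow> real" where
  "count_comp c x = real (card {i. x i = c})"

definition expected_removed ::
  "('n::finite \<Rightarrow> 'n \<Rightarrow> real) \<Rightarrow> ('n \<Rightarrow> real) \<Rightarrow> ('n \<Rightarrow> real)
   \<Rightarrow> ('n \<Rightarrow> comp) \<Rightarrow> real \<Rightarrow> real" where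
  "expected_removed a \<beta> \<delta> x0 t =
     (\<Sum>y\<in>UNIV. sir_trans a \<beta> \<delta> t x0 y * count_comp Rem y)"

definition sir_lambda ::
  "('n::finite \<Rightarrow> 'n \<Rightarrow> real) \<Rightarrow> ('n \<Rightarrow> real) \<Rightarrow> ('n \<Rightarrow> real)
   \<Rightarrow> ('n \<Rightarrow> comp) \<Rightarrow> real" where
  "sir_lambda a \<beta> \<delta> x0 =
     Lim at_top (expected_removed a \<beta> \<delta> x0) - count_comp Inf x0"

end

theory Submission
  imports Defs
begin

text \<open>With \<open>V = v\<^sup>T I + \<sigma>\<^sub>R\<close>, the hypothesis on \<open>v\<close> makes the drift \<open>Q V\<close> of the chain
  nonpositive at every configuration it can reach (there, only initially susceptible nodes are
  susceptible), so \<open>E V(X\<^sub>t) \<le> V(X\<^sub>0) = v\<^sup>T I(0)\<close>. The expected number of removed nodes is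
  nondecreasing, since removals are never undone, and bounded by \<open>E V(X\<^sub>t)\<close>; hence its limit
  exists and is at most \<open>v\<^sup>T I(0) < lambda_bar + \<sigma>\<^sub>I(0)\<close>. The transition probabilities are
  the entries of \<open>exp (t Q)\<close>; they are nonnegative because every transition strictly increases
  the total stage of the nodes.\<close>

definition mat_exp :: "('s::finite \<Rightarrow> 's \<Rightarrow> real) \<Rightarrow> real \<Rightarrow> 's \<Rightarrow> 's \<Rightarrow> real" where
  "mat_exp Q t x y = (\<Sum>k. t ^ k / fact k * mat_pow Q k x y)"

lemma sir_trans_eq_mat_exp: "sir_trans a \<beta> \<delta> = mat_exp (sir_gen a \<beta> \<delta>)"
  by (simp add: fun_eq_iff sir_trans_def mat_exp_def)

lemma abs_mat_pow_le:
  fixes Q :: "'s::finite \<Rightarrow> 's \<Rightarrow> real"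
  shows "\<bar>mat_pow Q k x y\<bar> \<le> (\<Sum>z\<in>UNIV. \<Sum>w\<in>UNIV. \<bar>Q z w\<bar>) ^ k"
proof (induction k arbitrary: y)
  case 0
  then show ?case by simp
next
  case (Suc k)
  define C where "C = (\<Sum>z\<in>UNIV. \<Sum>w\<in>UNIV. \<bar>Q z w\<bar>)"
  have col: "(\<Sum>z\<in>UNIV. \<bar>Q z y\<bar>) \<le> C"
    unfolding C_def by (intro sum_mono member_le_sum) auto
  have "\<bar>mat_pow Q (Suc k) x y\<bar> \<le> (\<Sum>z\<in>UNIV. \<bar>mat_pow Q k x z\<bar> * \<bar>Q z y\<bar>)"
    by (simp add: abs_mult[symmetric] sum_abs)
  also have "\<dots> \<le> (\<Sum>z\<in>UNIV. C ^ k * \<bar>Q z y\<bar>)"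
    using Suc.IH by (intro sum_mono mult_right_mono) (auto simp: C_def)
  also have "\<dots> \<le> C ^ k * C"
    using col by (simp add: sum_distrib_left[symmetric] C_def mult_left_mono sum_nonneg)
  finally show ?case by (simp add: C_def mult.commute)
qed

lemma summable_mat_exp_series:
  fixes Q :: "'s::finite \<Rightarrow> 's \<Rightarrow> real"
  shows "summable (\<lambda>k. t ^ k / fact k * mat_pow Q k x y)"
proof (rule summable_comparison_test[OF _ summable_exp], intro exI allI impI)
  define C where "C = (\<Sum>z\<in>UNIV. \<Sum>w\<in>UNIV. \<bar>Q z w\<bar>)"
  fix k :: nat
  have "norm (t ^ k / fact k * mat_pow Q k x y) = \<bar>t\<bar> ^ k / fact k * \<bar>mat_pow Q k x y\<bar>"
    by (simp add: abs_mult power_abs)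
  also have "\<dots> \<le> \<bar>t\<bar> ^ k / fact k * C ^ k"
    by (intro mult_left_mono abs_mat_pow_le[of Q, folded C_def]) auto
  also have "\<dots> = inverse (fact k) * (\<bar>t\<bar> * C) ^ k"
    by (simp add: power_mult_distrib field_simps)
  finally show "norm (t ^ k / fact k * mat_pow Q k x y) \<le> inverse (fact k) * (\<bar>t\<bar> * C) ^ k" .
qed

lemma mat_exp_0: "mat_exp Q 0 x y = (if x = y then 1 else 0)"
  unfolding mat_exp_def by (subst suminf_finite[of "{0}"]) auto

lemma has_real_derivative_mat_exp:
  fixes Q :: "'s::finite \<Rightarrow> 's \<Rightarrow> real"
  shows "((\<lambda>t. mat_exp Q t x y) has_real_derivative (\<Sum>z\<in>UNIV. mat_exp Q t x z * Q z y)) (at t)"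
proof -
  define c where "c k = mat_pow Q k x y / fact k" for k
  have mat_exp_eq: "(\<lambda>t. mat_exp Q t x y) = (\<lambda>t. \<Sum>k. c k * t ^ k)"
    by (simp add: mat_exp_def c_def field_simps)
  have summable: "summable (\<lambda>k. c k * s ^ k)" for s
    using summable_mat_exp_series[of s Q x y] by (simp add: c_def field_simps)
  have "diffs c k = mat_pow Q (Suc k) x y / fact k" for k
    by (simp add: diffs_def c_def del: mat_pow.simps of_nat_Suc)
  then have diffs_term: "diffs c k * t ^ k = (\<Sum>z\<in>UNIV. t ^ k / fact k * mat_pow Q k x z * Q z y)" for k
    by (simp add: sum_distrib_left sum_divide_distrib field_simps)
  have "(\<Sum>k. diffs c k * t ^ k) = (\<Sum>z\<in>UNIV. \<Sum>k. t ^ k / fact k * mat_pow Q k x z * Q z y)"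
    unfolding diffs_term by (intro suminf_sum summable_mult2 summable_mat_exp_series)
  also have "\<dots> = (\<Sum>z\<in>UNIV. mat_exp Q t x z * Q z y)"
    unfolding mat_exp_def by (intro sum.cong refl suminf_mult2[symmetric] summable_mat_exp_series)
  finally show ?thesis
    using termdiffs_strong_converges_everywhere[of c t, OF summable] unfolding mat_exp_eq by simp
qed

lemma has_real_derivative_mat_exp_expectation:
  fixes Q :: "'s::finite \<Rightarrow> 's \<Rightarrow> real"
  shows "((\<lambda>t. \<Sum>y\<in>UNIV. mat_exp Q t x y * f y) has_real_derivative
          (\<Sum>z\<in>UNIV. mat_exp Q t x z * (\<Sum>y\<in>UNIV. Q z y * f y))) (at t)"
proof -
  have "((\<lambda>t. \<Sum>y\<in>UNIV. mat_exp Q t x y * f y) has_real_derivative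
          (\<Sum>y\<in>UNIV. (\<Sum>z\<in>UNIV. mat_exp Q t x z * Q z y) * f y)) (at t)"
    by (intro DERIV_sum DERIV_cmult_right has_real_derivative_mat_exp)
  also have "(\<Sum>y\<in>UNIV. (\<Sum>z\<in>UNIV. mat_exp Q t x z * Q z y) * f y)
           = (\<Sum>z\<in>UNIV. mat_exp Q t x z * (\<Sum>y\<in>UNIV. Q z y * f y))"
    by (simp add: sum_distrib_left sum_distrib_right mult.assoc) (rule sum.swap)
  finally show ?thesis .
qed

lemma mat_exp_expectation_0: "(\<Sum>y\<in>UNIV. mat_exp Q 0 x y * f y) = f x"
  by (simp add: mat_exp_0 if_distrib[of "\<lambda>c. c * _"] cong: if_cong)

text \<open>For a Q-matrix whose transitions strictly increase a rank, nonnegativity of \<open>P(t)\<close> follows by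
  induction on the rank of the target state: with \<open>q = - Q y y\<close>, the column equation reads
  \<open>(e\<^sup>q\<^sup>t P x y)' = e\<^sup>q\<^sup>t \<Sum>\<^sub>z\<^sub>\<noteq>\<^sub>y P x z Q z y\<close>, where only states \<open>z\<close> of lower rank contribute.\<close>
lemma mat_exp_nonneg_graded:
  fixes Q :: "'s::finite \<Rightarrow> 's \<Rightarrow> real" and r :: "'s \<Rightarrow> nat"
  assumes offdiag_nonneg: "\<And>z y. z \<noteq> y \<Longrightarrow> Q z y \<ge> 0"
    and graded: "\<And>z y. z \<noteq> y \<Longrightarrow> Q z y \<noteq> 0 \<Longrightarrow> r z < r y"
    and "t \<ge> 0"
  shows "mat_exp Q t x y \<ge> 0"
  using \<open>t \<ge> 0\<close>
proof (induction y arbitrary: t rule: measure_induct_rule[where f = r])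
  case (less y)
  define g where "g s = exp (- Q y y * s) * mat_exp Q s x y" for s
  have "g 0 \<le> g t"
  proof (rule DERIV_nonneg_imp_nondecreasing[OF less.prems])
    fix s :: real
    assume s: "0 \<le> s" "s \<le> t"
    have "(\<Sum>z\<in>UNIV. mat_exp Q s x z * Q z y)
        = mat_exp Q s x y * Q y y + (\<Sum>z\<in>UNIV - {y}. mat_exp Q s x z * Q z y)"
      by (subst sum.remove[of UNIV y]) auto
    then have "(g has_real_derivative
        exp (- Q y y * s) * (\<Sum>z\<in>UNIV - {y}. mat_exp Q s x z * Q z y)) (at s)"
      unfolding g_def
      by (auto intro!: derivative_eq_intros has_real_derivative_mat_exp simp: algebra_simps)
    moreover have "(\<Sum>z\<in>UNIV - {y}. mat_exp Q s x z * Q z y) \<ge> 0"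
    proof (intro sum_nonneg)
      fix z
      assume "z \<in> UNIV - {y}"
      then show "mat_exp Q s x z * Q z y \<ge> 0"
        using less.IH[of z s] s offdiag_nonneg[of z y] graded[of z y]
        by (cases "Q z y = 0") auto
    qed
    ultimately show "\<exists>D. (g has_real_derivative D) (at s) \<and> 0 \<le> D"
      by auto
  qed
  moreover have "g 0 \<ge> 0"
    by (simp add: g_def mat_exp_0)
  ultimately have "0 \<le> exp (- Q y y * t) * mat_exp Q t x y"
    unfolding g_def by linarith
  then show ?case
    by (simp add: zero_le_mult_iff)
qed

lemma mat_pow_eq_0_outside_closed:
  fixes Q :: "'s::finite \<Rightarrow> 's \<Rightarrow> real"
  assumes "x \<in> S"
    and closed: "\<And>z y. z \<in> S \<Longrightarrow> z \<noteq> y \<Longrightarrow> Q z y \<noteq> 0 \<Longrightarrow> y \<in> S"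
    and "y \<notin> S"
  shows "mat_pow Q k x y = 0"
  using \<open>y \<notin> S\<close>
proof (induction k arbitrary: y)
  case 0
  then show ?case using \<open>x \<in> S\<close> by auto
next
  case (Suc k)
  have "mat_pow Q k x z * Q z y = 0" for z
    using Suc closed[of z y] by (cases "z \<in> S") auto
  then show ?case by (simp only: mat_pow.simps sum.neutral_const)
qed

lemma mat_exp_eq_0_outside_closed:
  fixes Q :: "'s::finite \<Rightarrow> 's \<Rightarrow> real"
  assumes "x \<in> S"
    and "\<And>z y. z \<in> S \<Longrightarrow> z \<noteq> y \<Longrightarrow> Q z y \<noteq> 0 \<Longrightarrow> y \<in> S"
    and "y \<notin> S"
  shows "mat_exp Q t x y = 0"
  by (simp add: mat_exp_def mat_pow_eq_0_outside_closed[OF assms])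

lemma mat_exp_expectation_mono:
  fixes Q :: "'s::finite \<Rightarrow> 's \<Rightarrow> real"
  assumes nonneg: "\<And>t y. t \<ge> 0 \<Longrightarrow> mat_exp Q t x y \<ge> 0"
    and support: "\<And>t y. y \<notin> S \<Longrightarrow> mat_exp Q t x y = 0"
    and drift: "\<And>z. z \<in> S \<Longrightarrow> (\<Sum>y\<in>UNIV. Q z y * f y) \<ge> 0"
    and "0 \<le> s" "s \<le> t"
  shows "(\<Sum>y\<in>UNIV. mat_exp Q s x y * f y) \<le> (\<Sum>y\<in>UNIV. mat_exp Q t x y * f y)"
proof (rule DERIV_nonneg_imp_nondecreasing[OF \<open>s \<le> t\<close>])
  fix r :: real
  assume "s \<le> r" "r \<le> t"
  then have "mat_exp Q r x z * (\<Sum>y\<in>UNIV. Q z y * f y) \<ge> 0" for z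
    using nonneg[of r z] support[of z r] drift[of z] \<open>0 \<le> s\<close>
    by (cases "z \<in> S") auto
  then show "\<exists>D. ((\<lambda>t. \<Sum>y\<in>UNIV. mat_exp Q t x y * f y) has_real_derivative D) (at r) \<and> D \<ge> 0"
    by (blast intro: has_real_derivative_mat_exp_expectation sum_nonneg)
qed

lemma mat_exp_expectation_le_initial:
  fixes Q :: "'s::finite \<Rightarrow> 's \<Rightarrow> real"
  assumes "\<And>t y. t \<ge> 0 \<Longrightarrow> mat_exp Q t x y \<ge> 0"
    and "\<And>t y. y \<notin> S \<Longrightarrow> mat_exp Q t x y = 0"
    and drift: "\<And>z. z \<in> S \<Longrightarrow> (\<Sum>y\<in>UNIV. Q z y * f y) \<le> 0"
    and "t \<ge> 0"
  shows "(\<Sum>y\<in>UNIV. mat_exp Q t x y * f y) \<le> f x"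
proof -
  have "(\<Sum>y\<in>UNIV. Q z y * - f y) \<ge> 0" if "z \<in> S" for z
    using drift[OF that] by (simp add: sum_negf)
  from mat_exp_expectation_mono[of Q x S "\<lambda>y. - f y", OF assms(1,2) this order.refl \<open>t \<ge> 0\<close>]
  show ?thesis
    by (simp add: mat_exp_expectation_0 sum_negf)
qed

lemma Lim_at_top_le_if_mono_bounded:
  fixes f :: "real \<Rightarrow> real"
  assumes mono: "\<And>s t. 0 \<le> s \<Longrightarrow> s \<le> t \<Longrightarrow> f s \<le> f t"
    and bounded: "\<And>t. 0 \<le> t \<Longrightarrow> f t \<le> B"
  shows "Lim at_top f \<le> B"
proof -
  define l where "l = Sup (f ` {0..})"
  have bdd: "bdd_above (f ` {0..})"
    using bounded by (intro bdd_aboveI[of _ B]) auto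
  have "(f \<longlongrightarrow> l) at_top"
  proof (rule increasing_tendsto)
    show "\<forall>\<^sub>F t in at_top. f t \<le> l"
      using eventually_ge_at_top[of "0::real"]
      by eventually_elim (auto simp: l_def intro!: cSup_upper bdd)
  next
    fix m
    assume "m < l"
    then obtain s where s: "s \<ge> 0" "m < f s"
      unfolding l_def using less_cSup_iff[OF _ bdd] by auto
    show "\<forall>\<^sub>F t in at_top. m < f t"
      using eventually_ge_at_top[of s] by eventually_elim (use s mono in force)
  qed
  then have "Lim at_top f = l"
    by (rule tendsto_Lim[OF trivial_limit_at_top_linorder])
  also have "l \<le> B"
    unfolding l_def using bounded by (intro cSup_least) auto
  finally show ?thesis .
qed

lemma sum_fun_upd:
  fixes f :: "'n::finite \<Rightarrow> 'c \<Rightarrow> 'b::ab_group_add"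
  shows "(\<Sum>j\<in>UNIV. f j ((z(i := c)) j)) = (\<Sum>j\<in>UNIV. f j (z j)) - f i (z i) + f i c"
proof -
  have "(\<Sum>j\<in>UNIV - {i}. f j ((z(i := c)) j)) = (\<Sum>j\<in>UNIV - {i}. f j (z j))"
    by (intro sum.cong) auto
  then show ?thesis
    by (simp add: sum.remove[of UNIV i])
qed

lemma sir_rate_nonneg:
  assumes "\<And>i j. a i j \<ge> 0" "\<And>i. \<beta> i \<ge> 0" "\<And>i. \<delta> i \<ge> 0"
  shows "sir_rate a \<beta> \<delta> x y \<ge> 0"
  unfolding sir_rate_def using assms
  by (intro sum_nonneg add_nonneg_nonneg) (auto intro!: mult_nonneg_nonneg sum_nonneg)

lemma sir_rate_neq_0_imp_step:
  assumes "sir_rate a \<beta> \<delta> z y \<noteq> 0"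
  obtains i where "z i = Sus" "y = z(i := Inf)" | i where "z i = Inf" "y = z(i := Rem)"
proof -
  have "\<exists>i. (z i = Sus \<and> y = z(i := Inf)) \<or> (z i = Inf \<and> y = z(i := Rem))"
  proof (rule ccontr)
    assume "\<not> ?thesis"
    then have "sir_rate a \<beta> \<delta> z y = 0"
      unfolding sir_rate_def by (intro sum.neutral) auto
    with assms show False by simp
  qed
  with that show ?thesis by blast
qed

fun comp_rank :: "comp \<Rightarrow> nat" where
  "comp_rank Sus = 0"
| "comp_rank Inf = 1"
| "comp_rank Rem = 2"

definition config_rank :: "('n::finite \<Rightarrow> comp) \<Rightarrow> nat" where
  "config_rank y = (\<Sum>i\<in>UNIV. comp_rank (y i))"

lemma config_rank_fun_upd:
  "config_rank (z(i := c)) + comp_rank (z i) = config_rank z + comp_rank c"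
proof -
  have "int (config_rank (z(i := c)))
      = int (config_rank z) - int (comp_rank (z i)) + int (comp_rank c)"
    unfolding config_rank_def of_nat_sum by (rule sum_fun_upd)
  then show ?thesis by linarith
qed

lemma config_rank_less_if_sir_rate_neq_0:
  assumes "sir_rate a \<beta> \<delta> z y \<noteq> 0"
  shows "config_rank z < config_rank y"
  using assms
proof (cases rule: sir_rate_neq_0_imp_step)
  case (1 i)
  then show ?thesis using config_rank_fun_upd[of z i Inf] by simp
next
  case (2 i)
  then show ?thesis using config_rank_fun_upd[of z i Rem] by simp
qed

lemma mat_exp_sir_gen_nonneg:
  assumes "\<And>i j. a i j \<ge> 0" "\<And>i. \<beta> i \<ge> 0" "\<And>i. \<delta> i \<ge> 0" and "t \<ge> 0"
  shows "mat_exp (sir_gen a \<beta> \<delta>) t x y \<ge> 0"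
proof (rule mat_exp_nonneg_graded[where r = config_rank])
  fix z y :: "'a \<Rightarrow> comp"
  assume "z \<noteq> y"
  then show "sir_gen a \<beta> \<delta> z y \<ge> 0"
    using sir_rate_nonneg[OF assms(1-3)] by (simp add: sir_gen_def)
  show "sir_gen a \<beta> \<delta> z y \<noteq> 0 \<Longrightarrow> config_rank z < config_rank y"
    using \<open>z \<noteq> y\<close> config_rank_less_if_sir_rate_neq_0 by (simp add: sir_gen_def)
qed (fact \<open>t \<ge> 0\<close>)

text \<open>Nodes never become susceptible again, so the chain stays among the configurations whose
  susceptible nodes were susceptible initially.\<close>
lemma mat_exp_sir_gen_eq_0_if_new_susceptible:
  assumes "y i = Sus" "x i \<noteq> Sus"
  shows "mat_exp (sir_gen a \<beta> \<delta>) t x y = 0"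
proof (rule mat_exp_eq_0_outside_closed[where S = "{w. \<forall>i. w i = Sus \<longrightarrow> x i = Sus}"])
  fix z w
  assume "z \<in> {w. \<forall>i. w i = Sus \<longrightarrow> x i = Sus}" "z \<noteq> w" "sir_gen a \<beta> \<delta> z w \<noteq> 0"
  then show "w \<in> {w. \<forall>i. w i = Sus \<longrightarrow> x i = Sus}"
    by (auto simp: sir_gen_def split: if_splits elim!: sir_rate_neq_0_imp_step)
qed (use assms in auto)

lemma sir_rate_weighted_sum:
  "(\<Sum>y\<in>UNIV - {z}. sir_rate a \<beta> \<delta> z y * h y) =
   (\<Sum>i\<in>UNIV.
      (if z i = Sus then \<beta> i * (\<Sum>j\<in>UNIV. a i j * (if z j = Inf then 1 else 0)) * h (z(i := Inf))
       else 0)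
    + (if z i = Inf then \<delta> i * h (z(i := Rem)) else 0))" (is "_ = ?rhs")
proof -
  have "(\<Sum>y\<in>UNIV - {z}. sir_rate a \<beta> \<delta> z y * h y) =
    (\<Sum>i\<in>UNIV. \<Sum>y\<in>UNIV - {z}.
        (if y = z(i := Inf) then (if z i = Sus then
           \<beta> i * (\<Sum>j\<in>UNIV. a i j * (if z j = Inf then 1 else 0)) * h (z(i := Inf)) else 0) else 0)
      + (if y = z(i := Rem) then (if z i = Inf then \<delta> i * h (z(i := Rem)) else 0) else 0))"
    unfolding sir_rate_def sum_distrib_right
    by (subst sum.swap) (intro sum.cong refl, auto)
  also have "\<dots> = ?rhs"
    by (intro sum.cong refl) (auto simp: sum.distrib fun_upd_idem_iff)
  finally show ?thesis .
qed

lemma sir_gen_apply: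
  "(\<Sum>y\<in>UNIV. sir_gen a \<beta> \<delta> z y * g y) =
   (\<Sum>i\<in>UNIV.
      (if z i = Sus then \<beta> i * (\<Sum>j\<in>UNIV. a i j * (if z j = Inf then 1 else 0)) * (g (z(i := Inf)) - g z)
       else 0)
    + (if z i = Inf then \<delta> i * (g (z(i := Rem)) - g z) else 0))" (is "_ = ?rhs")
proof -
  have "(\<Sum>y\<in>UNIV. sir_gen a \<beta> \<delta> z y * g y) =
      sir_gen a \<beta> \<delta> z z * g z + (\<Sum>y\<in>UNIV - {z}. sir_gen a \<beta> \<delta> z y * g y)"
    by (subst sum.remove[of UNIV z]) auto
  also have "\<dots> = (\<Sum>y\<in>UNIV - {z}. sir_rate a \<beta> \<delta> z y * (g y - g z))"
    by (simp add: sir_gen_def sum_distrib_right sum_subtractf right_diff_distrib)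
  also have "\<dots> = ?rhs"
    by (rule sir_rate_weighted_sum)
  finally show ?thesis .
qed

lemma sir_gen_apply_additive:
  "(\<Sum>y\<in>UNIV. sir_gen a \<beta> \<delta> z y * (\<Sum>j\<in>UNIV. \<phi> j (y j))) =
   (\<Sum>i\<in>UNIV.
      (if z i = Sus then \<beta> i * (\<Sum>j\<in>UNIV. a i j * (if z j = Inf then 1 else 0)) * (\<phi> i Inf - \<phi> i Sus)
       else 0)
    + (if z i = Inf then \<delta> i * (\<phi> i Rem - \<phi> i Inf) else 0))"
  unfolding sir_gen_apply sum_fun_upd by (intro sum.cong refl) auto

lemma count_comp_eq_sum: "count_comp c y = (\<Sum>i\<in>UNIV. if y i = c then 1 else 0)"
  unfolding count_comp_def by (simp add: sum.If_cases)

lemma sir_drift_removed_nonneg: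
  assumes "\<And>i. \<delta> i \<ge> 0"
  shows "(\<Sum>y\<in>UNIV. sir_gen a \<beta> \<delta> z y * count_comp Rem y) \<ge> 0"
  unfolding count_comp_eq_sum
    sir_gen_apply_additive[where \<phi> = "\<lambda>j c. if c = Rem then 1 else 0"]
  using assms by (intro sum_nonneg) auto

definition sir_potential :: "('n::finite \<Rightarrow> real) \<Rightarrow> ('n \<Rightarrow> comp) \<Rightarrow> real" where
  "sir_potential v y = (\<Sum>j\<in>UNIV. (if y j = Inf then v j else 0) + (if y j = Rem then 1 else 0))"

lemma count_removed_le_sir_potential:
  assumes "\<And>i. v i \<ge> 0"
  shows "count_comp Rem y \<le> sir_potential v y"
  unfolding count_comp_eq_sum sir_potential_def using assms by (intro sum_mono) auto

lemma sir_drift_potential_nonpos: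
  assumes a_nonneg: "\<And>i j. a i j \<ge> 0" and \<beta>_nonneg: "\<And>i. \<beta> i \<ge> 0" and v_nonneg: "\<And>i. v i \<ge> 0"
    and cond: "\<And>k. (\<Sum>j\<in>UNIV. v j * (if x j = Sus then 1 else 0) * \<beta> j * a j k) + \<delta> k < v k * \<delta> k"
    and reach: "\<And>i. z i = Sus \<Longrightarrow> x i = Sus"
  shows "(\<Sum>y\<in>UNIV. sir_gen a \<beta> \<delta> z y * sir_potential v y) \<le> 0"
proof -
  define infected where "infected j = (if z j = Inf then 1 else (0::real))" for j
  define J where "J j = (if x j = Sus then 1 else (0::real))" for j
  have "(\<Sum>y\<in>UNIV. sir_gen a \<beta> \<delta> z y * sir_potential v y)
      = (\<Sum>i\<in>UNIV. (if z i = Sus then \<beta> i * (\<Sum>k\<in>UNIV. a i k * infected k) * v i else 0)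
          + infected i * (\<delta> i - v i * \<delta> i))"
    unfolding sir_potential_def infected_def sir_gen_apply_additive[where
      \<phi> = "\<lambda>j c. (if c = Inf then v j else 0) + (if c = Rem then 1 else 0)"]
    by (intro sum.cong refl) (auto simp: algebra_simps)
  also have "\<dots> \<le> (\<Sum>i\<in>UNIV. J i * \<beta> i * (\<Sum>k\<in>UNIV. a i k * infected k) * v i
          + infected i * (\<delta> i - v i * \<delta> i))"
    using reach a_nonneg \<beta>_nonneg v_nonneg
    by (intro sum_mono add_right_mono) (auto simp: J_def infected_def intro!: sum_nonneg mult_nonneg_nonneg)
  also have "\<dots> = (\<Sum>k\<in>UNIV. infected k *
          ((\<Sum>j\<in>UNIV. v j * J j * \<beta> j * a j k) + \<delta> k - v k * \<delta> k))"
  proof -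
    have "(\<Sum>i\<in>UNIV. J i * \<beta> i * (\<Sum>k\<in>UNIV. a i k * infected k) * v i)
        = (\<Sum>k\<in>UNIV. infected k * (\<Sum>j\<in>UNIV. v j * J j * \<beta> j * a j k))"
      by (simp add: sum_distrib_left sum_distrib_right mult_ac) (rule sum.swap)
    then show ?thesis
      by (simp add: sum.distrib sum_subtractf distrib_left right_diff_distrib mult_ac)
  qed
  also have "\<dots> \<le> 0"
    using cond by (intro sum_nonpos) (auto simp: infected_def J_def less_imp_le)
  finally show ?thesis .
qed

lemma expected_removed_mono:
  assumes "\<And>i j. a i j \<ge> 0" "\<And>i. \<beta> i \<ge> 0" "\<And>i. \<delta> i \<ge> 0" and "0 \<le> s" "s \<le> t"
  shows "expected_removed a \<beta> \<delta> x s \<le> expected_removed a \<beta> \<delta> x t"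
  unfolding expected_removed_def sir_trans_eq_mat_exp
  using assms
  by (intro mat_exp_expectation_mono[where S = UNIV] mat_exp_sir_gen_nonneg sir_drift_removed_nonneg)
    auto

lemma expected_removed_le_sir_potential:
  assumes "\<And>i j. a i j \<ge> 0" "\<And>i. \<beta> i \<ge> 0" "\<And>i. \<delta> i \<ge> 0" "\<And>i. v i \<ge> 0"
    and cond: "\<And>k. (\<Sum>j\<in>UNIV. v j * (if x j = Sus then 1 else 0) * \<beta> j * a j k) + \<delta> k < v k * \<delta> k"
    and "t \<ge> 0"
  shows "expected_removed a \<beta> \<delta> x t \<le> sir_potential v x"
proof -
  have P_nonneg: "\<And>t y. t \<ge> 0 \<Longrightarrow> mat_exp (sir_gen a \<beta> \<delta>) t x y \<ge> 0"
    using assms(1-3) by (rule mat_exp_sir_gen_nonneg)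
  have "expected_removed a \<beta> \<delta> x t \<le> (\<Sum>y\<in>UNIV. mat_exp (sir_gen a \<beta> \<delta>) t x y * sir_potential v y)"
    unfolding expected_removed_def sir_trans_eq_mat_exp
    using P_nonneg[OF \<open>t \<ge> 0\<close>] count_removed_le_sir_potential[OF assms(4)]
    by (intro sum_mono mult_left_mono) auto
  also have "\<dots> \<le> sir_potential v x"
  proof (rule mat_exp_expectation_le_initial[where S = "{y. \<forall>i. y i = Sus \<longrightarrow> x i = Sus}"])
    show "(\<Sum>y\<in>UNIV. sir_gen a \<beta> \<delta> z y * sir_potential v y) \<le> 0"
      if "z \<in> {y. \<forall>i. y i = Sus \<longrightarrow> x i = Sus}" for z
      using that assms(1,2,4) cond by (intro sir_drift_potential_nonpos[where x = x]) auto
  qed (use P_nonneg mat_exp_sir_gen_eq_0_if_new_susceptible \<open>t \<ge> 0\<close> in auto)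
  finally show ?thesis .
qed

theorem proposition1:
  fixes a :: "'n::finite \<Rightarrow> 'n \<Rightarrow> real"
    and \<beta> \<delta> v :: "'n \<Rightarrow> real"
    and x0 :: "'n \<Rightarrow> comp"
    and lambda_bar :: real
  assumes adj01: "\<forall>i j. a i j = 0 \<or> a i j = 1"
    and adj_sym: "\<forall>i j. a i j = a j i"
    and beta_pos: "\<forall>i. \<beta> i > 0"
    and delta_pos: "\<forall>i. \<delta> i > 0"
    and init: "\<forall>i. x0 i = Sus \<or> x0 i = Inf"
    and lbar_pos: "lambda_bar > 0"
    and v_pos: "\<forall>i. v i > 0"
    and cond1: "\<forall>k. (\<Sum>j\<in>UNIV. v j * (if x0 j = Sus then 1 else 0) * \<beta> j * a j k) + \<delta> k
                    < v k * \<delta> k"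
    and cond2: "(\<Sum>j\<in>UNIV. v j * (if x0 j = Inf then 1 else 0))
                  < lambda_bar + count_comp Inf x0"
  shows "sir_lambda a \<beta> \<delta> x0 < lambda_bar"
proof -
  have a_nonneg: "a i j \<ge> 0" for i j
    using adj01 by (metis order.refl zero_le_one)
  have \<beta>_nonneg: "\<beta> i \<ge> 0" and \<delta>_nonneg: "\<delta> i \<ge> 0" and v_nonneg: "v i \<ge> 0" for i
    using beta_pos delta_pos v_pos by (auto intro: less_imp_le)
  have "Lim at_top (expected_removed a \<beta> \<delta> x0) \<le> sir_potential v x0"
    using a_nonneg \<beta>_nonneg \<delta>_nonneg v_nonneg cond1
    by (intro Lim_at_top_le_if_mono_bounded expected_removed_mono expected_removed_le_sir_potential)
      auto
  moreover have "x0 j \<noteq> Rem" for j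
    using init[rule_format, of j] by auto
  then have "sir_potential v x0 = (\<Sum>j\<in>UNIV. v j * (if x0 j = Inf then 1 else 0))"
    unfolding sir_potential_def by (intro sum.cong refl) auto
  ultimately show ?thesis
    unfolding sir_lambda_def using cond2 by simp
qed

end
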